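(* Let $n\ge2$, $\alpha\in\mathbb{Z}_2^{n-1}$ and write $\alpha0=(\alpha_0,\dots,\alpha_{n-2},0)\in\mathbb{Z}_2^n$. Then $$\max_{\beta,\gamma\in\mathbb{Z}_2^n}\mathrm{adp}^{\mathrm{XR}}_{n-1}(\alpha0,\beta\to\gamma)=\mathrm{adp}^{\oplus}(\alpha0,\alpha0\to0)=\max_{\beta,\gamma\in\mathbb{Z}_2^n}\mathrm{adp}^{\oplus}(\alpha0,\beta\to\gamma).$$
   Context: For $x\in\mathbb{Z}_2^n$, $x=(x_0,\dots,x_{n-1})$ is identified with the integer $\sum_i x_i2^{n-1-i}$ ($x_0$ most significant); $+$ is addition modulo $2^n$, $\oplus$ is bitwise XOR, $x\lll r=(x_r,\dots,x_{n-1},x_0,\dots,x_{r-1})$. For $f:(\mathbb{Z}_2^n)^2\to\mathbb{Z}_2^n$, $\mathrm{adp}^f(\alpha,\beta\to\gamma)=4^{-n}\#\{(x,y): f(x+\alpha,y+\beta)=f(x,y)+\gamma\}$. $\mathrm{adp}^{\oplus}$ is this for $f(x,y)=x\oplus y$, and $\mathrm{adp}^{\mathrm{XR}}_r$ for $f(x,y)=(x\oplus y)\lll r$. *)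

theory Defs
  imports Main Complex_Main
begin

text \<open>Elements of Z_2^n are represented by natural numbers below 2^n
  (bit x_0 is the most significant bit).  Addition is modulo 2^n.\<close>

definition addn :: "nat \<Rightarrow> nat \<Rightarrow> nat \<Rightarrow> nat" where
  "addn n x y = (x + y) mod 2 ^ n"

definition rotl :: "nat \<Rightarrow> nat \<Rightarrow> nat \<Rightarrow> nat" where
  "rotl n r x = (x * 2 ^ r) mod 2 ^ n + x div 2 ^ (n - r)"

definition xorf :: "nat \<Rightarrow> nat \<Rightarrow> nat \<Rightarrow> nat" where
  "xorf n x y = Bit_Operations.xor x y"

definition xrf :: "nat \<Rightarrow> nat \<Rightarrow> nat \<Rightarrow> nat \<Rightarrow> nat" where
  "xrf n r x y = rotl n r (Bit_Operations.xor x y)"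

definition adp :: "nat \<Rightarrow> (nat \<Rightarrow> nat \<Rightarrow> nat) \<Rightarrow> nat \<Rightarrow> nat \<Rightarrow> nat \<Rightarrow> real" where
  "adp n f \<alpha> \<beta> \<gamma> =
     real (card {(x, y). x < 2 ^ n \<and> y < 2 ^ n \<and>
                   f (addn n x \<alpha>) (addn n y \<beta>) = addn n (f x y) \<gamma>}) / 4 ^ n"

end

theory Submission
  imports Defs
begin

(* Count the solutions (x, y) of the xor differential equation bit by bit from the least
   significant end, keeping track of the carries into the three additions.  The count obeys a
   recursion over the lowest bit, along which an induction shows that (\<alpha>, \<alpha> \<rightarrow> 0), with
   equal carries into both inputs, maximises it.  Rotating left by n - 1 moves the lowest bit to
   the top, so on the n - 1 high bits the XR equation for \<alpha>0 becomes an xor equation with input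
   difference \<alpha> (the zero low bit of \<alpha>0 produces no carry).  This leaves at most 4 times the
   optimal count on n - 1 bits, which is the count for (\<alpha>0, \<alpha>0 \<rightarrow> 0) on n bits.  Rotation
   is a bijection, so for output difference 0 XR and xor have the same solutions. *)

lemma xor_div2: "xor (u::nat) v div 2 = xor (u div 2) (v div 2)"
  using drop_bit_xor[of 1 u v] by (simp add: drop_bit_eq_div)

lemma xor_mod2: "xor (u::nat) v mod 2 = (u + v) mod 2"
  by (simp add: mod2_eq_if even_xor_iff)

lemma xor_mod_power: "xor ((u::nat) mod 2 ^ n) (v mod 2 ^ n) = xor u v mod 2 ^ n"
  using take_bit_xor[of n u v] by (simp add: take_bit_eq_mod)

lemma xor_less_power: "(u::nat) < 2 ^ n \<Longrightarrow> v < 2 ^ n \<Longrightarrow> xor u v < 2 ^ n"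
  by (metis xor_mod_power mod_less mod_less_divisor zero_less_numeral zero_less_power)

lemma mod_Suc_power_eq_iff:
  "(u::nat) mod 2 ^ Suc n = v mod 2 ^ Suc n \<longleftrightarrow>
    u mod 2 = v mod 2 \<and> u div 2 mod 2 ^ n = v div 2 mod 2 ^ n"
proof -
  have split: "w mod 2 ^ Suc n = 2 * (w div 2 mod 2 ^ n) + w mod 2" for w :: nat
    using take_bit_Suc[of n w] by (simp add: take_bit_eq_mod)
  have "2 * p + r = 2 * q + s \<longleftrightarrow> r = s \<and> p = q" if "r < 2" "s < 2" for p q r s :: nat
    using that by arith
  then show ?thesis
    unfolding split by simp
qed

lemma mod_Suc_power_div2: "(u::nat) mod 2 ^ Suc n div 2 = u div 2 mod 2 ^ n"
  using take_bit_Suc[of n u] by (simp add: take_bit_eq_mod)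

lemma sum_lessThan_double: "(\<Sum>x<2 * N. f x) = (\<Sum>x0<2. \<Sum>x<N. f (2 * x + x0 :: nat))"
  by (induction N) (auto simp: numeral_2_eq_2 sum.distrib add.assoc)

lemma sum_pairs_lessThan_double:
  "(\<Sum>x<2 * N. \<Sum>y<2 * N. f x y) =
    (\<Sum>x0<2. \<Sum>y0<2. \<Sum>x<N. \<Sum>y<N. f (2 * x + x0) (2 * y + y0 :: nat))"
proof -
  have "(\<Sum>x<2 * N. \<Sum>y<2 * N. f x y) =
      (\<Sum>x0<2. \<Sum>x<N. \<Sum>y0<2. \<Sum>y<N. f (2 * x + x0) (2 * y + y0))"
    by (simp add: sum_lessThan_double)
  also have "\<dots> = (\<Sum>x0<2. \<Sum>y0<2. \<Sum>x<N. \<Sum>y<N. f (2 * x + x0) (2 * y + y0))"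
    by (intro sum.cong refl sum.swap)
  finally show ?thesis .
qed

lemma card_pairs_lessThan_eq_sum:
  "card {(x, y). x < N \<and> y < N \<and> P x y} = (\<Sum>x<N. \<Sum>y<N. of_bool (P x y))" for N :: nat
proof -
  have "{(x, y). x < N \<and> y < N \<and> P x y} = (SIGMA x:{..<N}. {..<N} \<inter> {y. P x y})"
    by auto
  then show ?thesis
    by simp
qed

definition carry :: "nat \<Rightarrow> nat \<Rightarrow> nat \<Rightarrow> nat" where
  "carry u v c = (u mod 2 + v mod 2 + c) div 2"

lemma carry_le_1: "c \<le> 1 \<Longrightarrow> carry u v c \<le> 1"
  unfolding carry_def by linarith

lemma add_div2_carry: "(u + v + c) div 2 = u div 2 + v div 2 + carry u v c"
proof -
  have "u + v + c = 2 * (u div 2 + v div 2) + (u mod 2 + v mod 2 + c)"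
    by simp
  then show ?thesis
    unfolding carry_def by (metis div_mult_self2 add.commute zero_neq_numeral)
qed

lemma carry_odd_if_ne:
  assumes "x < 2" "y < 2" "carry x \<alpha> c \<noteq> carry y \<alpha> c"
  shows "odd (carry x \<alpha> c + carry y \<alpha> c)"
proof -
  have "odd (s div 2 + (s + 1) div 2)" if "s div 2 \<noteq> (s + 1) div 2" for s :: nat
    using that by presburger
  moreover have "x = 0 \<and> y = 1 \<or> x = 1 \<and> y = 0"
    using assms by (auto simp: carry_def)
  ultimately show ?thesis
    using assms(3) unfolding carry_def by (auto simp: ac_simps)
qed

(* If \<alpha> mod 2 + c = 1 then carry x0 \<alpha> c = x0 and the parity condition leaves one y0 for
   each x0; otherwise carry x0 \<alpha> c does not depend on x0.  The proof checks all low bits. *)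
lemma carry_parity_sum_le:
  fixes H :: "nat \<Rightarrow> nat"
  assumes "c \<le> 1" "d \<le> 1" "e \<le> 1"
  shows "of_bool (even (\<alpha> + \<beta> + \<gamma> + c + d + e)) *
      (\<Sum>x0<2. \<Sum>y0<2.
        of_bool (even (q + carry x0 \<alpha> c + carry y0 \<beta> d + carry (x0 + y0) \<gamma> e)) * H (carry x0 \<alpha> c))
    \<le> (\<Sum>x0<2. \<Sum>y0<2. of_bool (carry x0 \<alpha> c = carry y0 \<alpha> c) * H (carry x0 \<alpha> c))"
proof -
  define a b g p where low_bits: "a = \<alpha> mod 2" "b = \<beta> mod 2" "g = \<gamma> mod 2" "p = q mod 2"
  have "even (\<alpha> + \<beta> + \<gamma> + c + d + e) \<longleftrightarrow> even (a + b + g + c + d + e)"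
    "even (q + r1 + r2 + r3) \<longleftrightarrow> even (p + r1 + r2 + r3)"
    "carry x \<alpha> c = carry x a c" "carry y \<beta> d = carry y b d" "carry z \<gamma> e = carry z g e"
    for r1 r2 r3 x y z
    unfolding low_bits carry_def by simp_all
  then have reduced: "?thesis \<longleftrightarrow>
      of_bool (even (a + b + g + c + d + e)) *
      (\<Sum>x0<2. \<Sum>y0<2.
        of_bool (even (p + carry x0 a c + carry y0 b d + carry (x0 + y0) g e)) * H (carry x0 a c))
    \<le> (\<Sum>x0<2. \<Sum>y0<2. of_bool (carry x0 a c = carry y0 a c) * H (carry x0 a c))"
    by (simp only:)
  have "{..<2::nat} = {0, 1}"
    by auto
  moreover have "a = 0 \<or> a = 1" "b = 0 \<or> b = 1" "g = 0 \<or> g = 1" "p = 0 \<or> p = 1"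
    "c = 0 \<or> c = 1" "d = 0 \<or> d = 1" "e = 0 \<or> e = 1"
    unfolding low_bits using assms by auto
  ultimately show ?thesis
    unfolding reduced by (elim disjE) (simp_all add: carry_def)
qed

(* c, d and e are carries into the lowest bit of x + \<alpha>, y + \<beta> and (x xor y) + \<gamma>. *)
definition xor_diff ::
    "nat \<Rightarrow> nat \<Rightarrow> nat \<Rightarrow> nat \<Rightarrow> nat \<Rightarrow> nat \<Rightarrow> nat \<Rightarrow> nat \<Rightarrow> nat \<Rightarrow> bool" where
  "xor_diff n \<alpha> \<beta> \<gamma> c d e x y \<longleftrightarrow>
     xor (x + \<alpha> + c) (y + \<beta> + d) mod 2 ^ n = (xor x y + \<gamma> + e) mod 2 ^ n"

definition xor_diff_count ::
    "nat \<Rightarrow> nat \<Rightarrow> nat \<Rightarrow> nat \<Rightarrow> nat \<Rightarrow> nat \<Rightarrow> nat \<Rightarrow> nat" where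
  "xor_diff_count n \<alpha> \<beta> \<gamma> c d e =
     (\<Sum>x<2 ^ n. \<Sum>y<2 ^ n. of_bool (xor_diff n \<alpha> \<beta> \<gamma> c d e x y))"

lemma xor_diff_Suc_iff:
  assumes "x0 < 2" "y0 < 2"
  shows "xor_diff (Suc n) \<alpha> \<beta> \<gamma> c d e (2 * x + x0) (2 * y + y0) \<longleftrightarrow>
    even (\<alpha> + \<beta> + \<gamma> + c + d + e) \<and>
    xor_diff n (\<alpha> div 2) (\<beta> div 2) (\<gamma> div 2)
      (carry x0 \<alpha> c) (carry y0 \<beta> d) (carry (x0 + y0) \<gamma> e) x y"
proof -
  have xor_low_bits: "xor (2 * x + x0) (2 * y + y0) div 2 = xor x y"
    "xor (2 * x + x0) (2 * y + y0) mod 2 = (x0 + y0) mod 2"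
    using assms unfolding xor_div2 xor_mod2 by simp_all presburger
  have "(2 * x + x0 + \<alpha> + c) div 2 = x + \<alpha> div 2 + carry x0 \<alpha> c"
    "(2 * y + y0 + \<beta> + d) div 2 = y + \<beta> div 2 + carry y0 \<beta> d"
    "(xor (2 * x + x0) (2 * y + y0) + \<gamma> + e) div 2 =
      xor x y + \<gamma> div 2 + carry (x0 + y0) \<gamma> e"
    using assms unfolding add_div2_carry xor_low_bits(1)
    by (simp_all add: carry_def xor_low_bits(2))
  moreover have "xor (2 * x + x0 + \<alpha> + c) (2 * y + y0 + \<beta> + d) mod 2
      = (xor (2 * x + x0) (2 * y + y0) + \<gamma> + e) mod 2 \<longleftrightarrow>
      even (\<alpha> + \<beta> + \<gamma> + c + d + e)"
    unfolding xor_mod2 by (simp add: mod2_eq_if even_xor_iff) argo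
  ultimately show ?thesis
    unfolding xor_diff_def mod_Suc_power_eq_iff xor_div2 by simp
qed

lemma xor_diff_count_Suc:
  "xor_diff_count (Suc n) \<alpha> \<beta> \<gamma> c d e =
    (if even (\<alpha> + \<beta> + \<gamma> + c + d + e)
     then \<Sum>x0<2. \<Sum>y0<2. xor_diff_count n (\<alpha> div 2) (\<beta> div 2) (\<gamma> div 2)
            (carry x0 \<alpha> c) (carry y0 \<beta> d) (carry (x0 + y0) \<gamma> e)
     else 0)"
proof -
  have "xor_diff_count (Suc n) \<alpha> \<beta> \<gamma> c d e = (\<Sum>x0<2. \<Sum>y0<2. \<Sum>x<2 ^ n. \<Sum>y<2 ^ n.
      of_bool (xor_diff (Suc n) \<alpha> \<beta> \<gamma> c d e (2 * x + x0) (2 * y + y0)))"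
    unfolding xor_diff_count_def power_Suc sum_pairs_lessThan_double ..
  also have "\<dots> = (\<Sum>x0<2. \<Sum>y0<2. \<Sum>x<2 ^ n. \<Sum>y<2 ^ n.
      of_bool (even (\<alpha> + \<beta> + \<gamma> + c + d + e)) *
      of_bool (xor_diff n (\<alpha> div 2) (\<beta> div 2) (\<gamma> div 2)
        (carry x0 \<alpha> c) (carry y0 \<beta> d) (carry (x0 + y0) \<gamma> e) x y))"
    by (intro sum.cong refl) (simp add: xor_diff_Suc_iff del: sum_of_bool_eq)
  finally show ?thesis
    by (simp add: xor_diff_count_def sum_distrib_left[symmetric] del: sum_of_bool_eq)
qed

lemma xor_diff_count_0 [simp]: "xor_diff_count 0 \<alpha> \<beta> \<gamma> c d e = 1"
  by (simp add: xor_diff_count_def xor_diff_def)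

lemma xor_diff_count_odd:
  "n \<noteq> 0 \<Longrightarrow> odd (\<alpha> + \<beta> + \<gamma> + c + d + e) \<Longrightarrow>
    xor_diff_count n \<alpha> \<beta> \<gamma> c d e = 0"
  by (cases n) (simp_all add: xor_diff_count_Suc)

lemma xor_diff_count_Suc_diagonal:
  assumes "n \<noteq> 0"
  shows "xor_diff_count (Suc n) \<alpha> \<alpha> 0 c c 0 =
    (\<Sum>x0<2. \<Sum>y0<2. of_bool (carry x0 \<alpha> c = carry y0 \<alpha> c) *
       xor_diff_count n (\<alpha> div 2) (\<alpha> div 2) 0 (carry x0 \<alpha> c) (carry x0 \<alpha> c) 0)"
proof -
  have "xor_diff_count n (\<alpha> div 2) (\<alpha> div 2) 0
      (carry x0 \<alpha> c) (carry y0 \<alpha> c) (carry (x0 + y0) 0 0) =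
      of_bool (carry x0 \<alpha> c = carry y0 \<alpha> c) *
       xor_diff_count n (\<alpha> div 2) (\<alpha> div 2) 0 (carry x0 \<alpha> c) (carry x0 \<alpha> c) 0"
    if "x0 < 2" "y0 < 2" for x0 y0
  proof (cases "carry x0 \<alpha> c = carry y0 \<alpha> c")
    case True
    then show ?thesis by (simp add: carry_def)
  next
    case False
    then show ?thesis
      using xor_diff_count_odd[OF assms] carry_odd_if_ne[OF that False] by (simp add: carry_def)
  qed
  then show ?thesis
    unfolding xor_diff_count_Suc by (simp del: sum_of_bool_eq)
qed

lemma xor_diff_count_le_diagonal:
  assumes "c \<le> 1" "d \<le> 1" "e \<le> 1"
  shows "xor_diff_count n \<alpha> \<beta> \<gamma> c d e \<le> xor_diff_count n \<alpha> \<alpha> 0 c c 0"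
  using assms
proof (induction n arbitrary: \<alpha> \<beta> \<gamma> c d e)
  case 0
  show ?case by simp
next
  case (Suc n)
  show ?case
  proof (cases "n = 0")
    case True
    then show ?thesis by (simp add: xor_diff_count_Suc)
  next
    case False
    define H where "H k = xor_diff_count n (\<alpha> div 2) (\<alpha> div 2) 0 k k 0" for k
    have term_le: "xor_diff_count n (\<alpha> div 2) (\<beta> div 2) (\<gamma> div 2)
          (carry x0 \<alpha> c) (carry y0 \<beta> d) (carry (x0 + y0) \<gamma> e)
        \<le> of_bool (even (\<alpha> div 2 + \<beta> div 2 + \<gamma> div 2
            + carry x0 \<alpha> c + carry y0 \<beta> d + carry (x0 + y0) \<gamma> e)) * H (carry x0 \<alpha> c)" for x0 y0
    proof (cases "even (\<alpha> div 2 + \<beta> div 2 + \<gamma> div 2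
        + carry x0 \<alpha> c + carry y0 \<beta> d + carry (x0 + y0) \<gamma> e)")
      case True
      have "carry x0 \<alpha> c \<le> 1" "carry y0 \<beta> d \<le> 1" "carry (x0 + y0) \<gamma> e \<le> 1"
        using Suc.prems carry_le_1 by blast+
      with True show ?thesis
        using Suc.IH unfolding H_def by simp
    next
      case False
      then show ?thesis
        using xor_diff_count_odd[OF \<open>n \<noteq> 0\<close>] by simp
    qed
    have "xor_diff_count (Suc n) \<alpha> \<beta> \<gamma> c d e =
        of_bool (even (\<alpha> + \<beta> + \<gamma> + c + d + e)) *
        (\<Sum>x0<2. \<Sum>y0<2. xor_diff_count n (\<alpha> div 2) (\<beta> div 2) (\<gamma> div 2)
           (carry x0 \<alpha> c) (carry y0 \<beta> d) (carry (x0 + y0) \<gamma> e))"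
      unfolding xor_diff_count_Suc by simp
    also have "\<dots> \<le> of_bool (even (\<alpha> + \<beta> + \<gamma> + c + d + e)) *
        (\<Sum>x0<2. \<Sum>y0<2. of_bool (even (\<alpha> div 2 + \<beta> div 2 + \<gamma> div 2
           + carry x0 \<alpha> c + carry y0 \<beta> d + carry (x0 + y0) \<gamma> e)) * H (carry x0 \<alpha> c))"
      by (intro mult_left_mono sum_mono term_le) simp
    also have "\<dots> \<le>
        (\<Sum>x0<2. \<Sum>y0<2. of_bool (carry x0 \<alpha> c = carry y0 \<alpha> c) * H (carry x0 \<alpha> c))"
      using Suc.prems by (rule carry_parity_sum_le)
    also have "\<dots> = xor_diff_count (Suc n) \<alpha> \<alpha> 0 c c 0"
      unfolding xor_diff_count_Suc_diagonal[OF False] H_def ..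
    finally show ?thesis .
  qed
qed

lemma xor_diff_count_Suc_double:
  "xor_diff_count (Suc n) (2 * a) (2 * a) 0 0 0 0 = 4 * xor_diff_count n a a 0 0 0 0"
proof -
  have "{..<2::nat} = {0, 1}"
    by auto
  then show ?thesis
    by (simp add: xor_diff_count_Suc carry_def)
qed

lemma adp_xorf_eq_count:
  "adp n (xorf n) \<alpha> \<beta> \<gamma> = xor_diff_count n \<alpha> \<beta> \<gamma> 0 0 0 / 4 ^ n"
  unfolding adp_def xorf_def addn_def card_pairs_lessThan_eq_sum xor_diff_count_def xor_diff_def
  by (simp add: xor_mod_power del: sum_of_bool_eq)

lemma adp_xorf_le_diagonal: "adp n (xorf n) \<alpha> \<beta> \<gamma> \<le> adp n (xorf n) \<alpha> \<alpha> 0"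
  unfolding adp_xorf_eq_count
  by (intro divide_right_mono of_nat_mono xor_diff_count_le_diagonal) simp_all

lemma rotl_eq: "r \<le> n \<Longrightarrow> rotl n r x = x mod 2 ^ (n - r) * 2 ^ r + x div 2 ^ (n - r)"
  unfolding rotl_def using mod_mult_mult2[of x "2 ^ r" "2 ^ (n - r)"]
  by (simp add: power_add[symmetric])

lemma rotl_mod_div:
  assumes "r \<le> n" "x < 2 ^ n"
  shows "rotl n r x mod 2 ^ r = x div 2 ^ (n - r)"
    and "rotl n r x div 2 ^ r = x mod 2 ^ (n - r)"
proof -
  have "x div 2 ^ (n - r) < 2 ^ r"
    using assms by (simp add: div_less_iff_less_mult power_add[symmetric])
  then show "rotl n r x mod 2 ^ r = x div 2 ^ (n - r)" "rotl n r x div 2 ^ r = x mod 2 ^ (n - r)"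
    using assms(1) by (simp_all add: rotl_eq)
qed

lemma rotl_less:
  assumes "r \<le> n" "x < 2 ^ n"
  shows "rotl n r x < 2 ^ n"
proof -
  have "x div 2 ^ (n - r) < 2 ^ r"
    using assms by (simp add: div_less_iff_less_mult power_add[symmetric])
  then have "rotl n r x < (x mod 2 ^ (n - r) + 1) * 2 ^ r"
    using assms(1) by (simp add: rotl_eq)
  also have "\<dots> \<le> 2 ^ (n - r) * 2 ^ r"
    by (intro mult_right_mono) (simp_all add: Suc_le_eq)
  finally show ?thesis
    using assms(1) by (simp add: power_add[symmetric])
qed

lemma rotl_inj_on: "r \<le> n \<Longrightarrow> inj_on (rotl n r) {..<2 ^ n}"
  by (intro inj_onI) (metis lessThan_iff rotl_mod_div div_mult_mod_eq)

lemma adp_xrf_zero: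
  assumes "r \<le> n"
  shows "adp n (xrf n r) \<alpha> \<beta> 0 = adp n (xorf n) \<alpha> \<beta> 0"
proof -
  have "rotl n r (xor ((x + \<alpha>) mod 2 ^ n) ((y + \<beta>) mod 2 ^ n)) =
        rotl n r (xor x y) mod 2 ^ n \<longleftrightarrow>
      xor ((x + \<alpha>) mod 2 ^ n) ((y + \<beta>) mod 2 ^ n) = xor x y mod 2 ^ n"
    if "x < 2 ^ n" "y < 2 ^ n" for x y
  proof -
    have "xor ((x + \<alpha>) mod 2 ^ n) ((y + \<beta>) mod 2 ^ n) < 2 ^ n" "xor x y < 2 ^ n"
      using that by (simp_all add: xor_less_power)
    then show ?thesis
      using rotl_inj_on[OF assms] rotl_less[OF assms, of "xor x y"] by (auto simp: inj_on_def)
  qed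
  then have "{(x, y). x < 2 ^ n \<and> y < 2 ^ n \<and>
        rotl n r (xor ((x + \<alpha>) mod 2 ^ n) ((y + \<beta>) mod 2 ^ n)) = rotl n r (xor x y) mod 2 ^ n}
      = {(x, y). x < 2 ^ n \<and> y < 2 ^ n \<and>
        xor ((x + \<alpha>) mod 2 ^ n) ((y + \<beta>) mod 2 ^ n) = xor x y mod 2 ^ n}"
    by blast
  then show ?thesis
    unfolding adp_def xrf_def xorf_def addn_def by simp
qed

(* Rotating left by m moves bit 0 to the top, so the low m bits of the rotated value are the
   high bits of the original; adding 2 * a produces no carry out of bit 0. *)
lemma rotl_Suc_diff_imp_xor_diff:
  assumes "x < 2 ^ Suc m" "y < 2 ^ Suc m"
    and "rotl (Suc m) m (xor ((x + 2 * a) mod 2 ^ Suc m) ((y + \<beta>) mod 2 ^ Suc m))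
      = (rotl (Suc m) m (xor x y) + \<gamma>) mod 2 ^ Suc m"
  shows "xor_diff m a (\<beta> div 2) \<gamma> 0 (carry y \<beta> 0) 0 (x div 2) (y div 2)"
proof -
  define z where "z = xor ((x + 2 * a) mod 2 ^ Suc m) ((y + \<beta>) mod 2 ^ Suc m)"
  have rotl_low: "rotl (Suc m) m u mod 2 ^ m = u div 2" if "u < 2 ^ Suc m" for u
    using rotl_mod_div(1)[of m "Suc m" u] that by simp
  have "z < 2 ^ Suc m"
    unfolding z_def by (intro xor_less_power) simp_all
  then have "z div 2 = rotl (Suc m) m z mod 2 ^ m"
    by (simp add: rotl_low)
  also have "\<dots> = (rotl (Suc m) m (xor x y) + \<gamma>) mod 2 ^ Suc m mod 2 ^ m"
    using assms(3) unfolding z_def by simp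
  also have "\<dots> = (rotl (Suc m) m (xor x y) mod 2 ^ m + \<gamma>) mod 2 ^ m"
    by (simp add: mod_mod_cancel le_imp_power_dvd mod_add_left_eq)
  also have "\<dots> = (xor (x div 2) (y div 2) + \<gamma>) mod 2 ^ m"
    using rotl_low[OF xor_less_power[OF assms(1,2)]] by (simp add: xor_div2)
  finally have "z div 2 = (xor (x div 2) (y div 2) + \<gamma>) mod 2 ^ m" .
  moreover have "z div 2 = xor (x div 2 + a) (y div 2 + \<beta> div 2 + carry y \<beta> 0) mod 2 ^ m"
    using add_div2_carry[of y \<beta> 0] unfolding z_def xor_div2 mod_Suc_power_div2 xor_mod_power
    by (simp add: add.commute)
  ultimately show ?thesis
    unfolding xor_diff_def by simp
qed

lemma card_rotl_Suc_diff_le: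
  "card {(x, y). x < 2 ^ Suc m \<and> y < 2 ^ Suc m \<and>
      rotl (Suc m) m (xor ((x + 2 * a) mod 2 ^ Suc m) ((y + \<beta>) mod 2 ^ Suc m))
        = (rotl (Suc m) m (xor x y) + \<gamma>) mod 2 ^ Suc m}
    \<le> xor_diff_count (Suc m) (2 * a) (2 * a) 0 0 0 0"
  (is "card {(x, y). x < 2 ^ Suc m \<and> y < 2 ^ Suc m \<and> ?rotl_diff x y} \<le> _")
proof -
  have "card {(x, y). x < 2 ^ Suc m \<and> y < 2 ^ Suc m \<and> ?rotl_diff x y}
      \<le> (\<Sum>x<2 ^ Suc m. \<Sum>y<2 ^ Suc m.
          of_bool (xor_diff m a (\<beta> div 2) \<gamma> 0 (carry y \<beta> 0) 0 (x div 2) (y div 2)))"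
    unfolding card_pairs_lessThan_eq_sum
  proof (intro sum_mono)
    fix x y :: nat
    assume "x \<in> {..<2 ^ Suc m}" "y \<in> {..<2 ^ Suc m}"
    then show "of_bool (?rotl_diff x y)
        \<le> (of_bool (xor_diff m a (\<beta> div 2) \<gamma> 0 (carry y \<beta> 0) 0 (x div 2) (y div 2)) :: nat)"
      using rotl_Suc_diff_imp_xor_diff[of x m y a \<beta> \<gamma>] by simp
  qed
  also have "\<dots> = (\<Sum>x0<2::nat. \<Sum>y0<2. xor_diff_count m a (\<beta> div 2) \<gamma> 0 (carry y0 \<beta> 0) 0)"
    unfolding power_Suc sum_pairs_lessThan_double xor_diff_count_def
    by (simp add: carry_def del: sum_of_bool_eq)
  also have "\<dots> \<le> (\<Sum>x0<2::nat. \<Sum>y0<2::nat. xor_diff_count m a a 0 0 0 0)"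
    by (intro sum_mono xor_diff_count_le_diagonal carry_le_1) simp_all
  also have "\<dots> = xor_diff_count (Suc m) (2 * a) (2 * a) 0 0 0 0"
    by (simp add: xor_diff_count_Suc_double)
  finally show ?thesis .
qed

lemma adp_xrf_le_xorf_diagonal:
  "adp (Suc m) (xrf (Suc m) m) (2 * a) \<beta> \<gamma> \<le> adp (Suc m) (xorf (Suc m)) (2 * a) (2 * a) 0"
  unfolding adp_xorf_eq_count unfolding adp_def xrf_def addn_def
  by (intro divide_right_mono of_nat_mono card_rotl_Suc_diff_le) simp

lemma Max_pairs_eqI:
  fixes F :: "nat \<Rightarrow> nat \<Rightarrow> 'a::linorder"
  assumes "\<And>b c. b < N \<Longrightarrow> c < N \<Longrightarrow> F b c \<le> v" and "b' < N" "c' < N" "F b' c' = v"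
  shows "Max {F b c | b c. b < N \<and> c < N} = v"
proof -
  have "{F b c | b c. b < N \<and> c < N} = (\<lambda>(b, c). F b c) ` ({..<N} \<times> {..<N})"
    by auto
  then show ?thesis
    using assms by (intro Max_eqI) auto
qed

theorem corollary4:
  fixes n a :: nat
  assumes "n \<ge> 2" and "a < 2 ^ (n - 1)"
  shows "Max {adp n (xrf n (n - 1)) (2 * a) b c | b c. b < 2 ^ n \<and> c < 2 ^ n}
           = adp n (xorf n) (2 * a) (2 * a) 0
       \<and> adp n (xorf n) (2 * a) (2 * a) 0
           = Max {adp n (xorf n) (2 * a) b c | b c. b < 2 ^ n \<and> c < 2 ^ n}"
proof -
  obtain m where n: "n = Suc m"
    using assms(1) by (cases n) auto
  have diagonal_in_range: "2 * a < 2 ^ n" "0 < (2::nat) ^ n"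
    using assms(2) n by simp_all
  have "Max {adp n (xrf n (n - 1)) (2 * a) b c | b c. b < 2 ^ n \<and> c < 2 ^ n}
      = adp n (xorf n) (2 * a) (2 * a) 0"
    using diagonal_in_range adp_xrf_le_xorf_diagonal[of m a] adp_xrf_zero[of "n - 1" n "2 * a" "2 * a"]
    unfolding n by (intro Max_pairs_eqI[where b' = "2 * a" and c' = 0]) simp_all
  moreover have "Max {adp n (xorf n) (2 * a) b c | b c. b < 2 ^ n \<and> c < 2 ^ n}
      = adp n (xorf n) (2 * a) (2 * a) 0"
    using diagonal_in_range adp_xorf_le_diagonal
    by (intro Max_pairs_eqI[where b' = "2 * a" and c' = 0]) simp_all
  ultimately show ?thesis
    by simp
qed

end
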